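(* Let $\theta:H\to H$ be an endomorphism. Then: (1) every $\theta$-maximal hyperideal of $H$ is an $n$-ary Endo-prime hyperideal associated with $\theta$; (2) if $E$ is a hyperideal of $H$ such that $rad(E)$ is a $\theta$-maximal hyperideal, then $E$ is an $n$-ary Endo-primary hyperideal associated with $\theta$.
   Context: Throughout, $(H,h,k)$ is a commutative Krasner $(m,n)$-hyperring with scalar identity $1_H$: $(H,h)$ is a canonical $m$-ary hypergroup (a commutative associative $m$-ary hyperoperation $h:H^m\to\mathcal P^*(H)$ with a unique zero $0$ such that $h(u,0^{(m-1)})=\{u\}$, unique inverses, reversibility), $k:H^n\to H$ is a commutative associative $n$-ary operation distributing over $h$ in each argument, $k(0,u_2^n)=0$, and $k(u,1_H^{(n-1)})=u$ for all $u$. Notation: $u_i^j$ denotes $u_i,\dots,u_j$ (empty if $j<i$); $u^{(t)}$ denotes $u$ repeated $t$ times; for $r=l(n-1)+1$, $k_{(l)}(u_1^r)=k(k(\cdots k(k(u_1^n),u_{n+1}^{2n-1})\cdots),u_{r-n+1}^{r})$. A hyperideal is a nonempty $I\subseteq H$ such that $(I,h)$ is an $m$-ary subhypergroup and $k(u_1^{i-1},I,u_{i+1}^n)\subseteq I$ for all $u_j\in H$. An endomorphism is a map $\theta$ with $\theta(h(u_1^m))=h(\theta(u_1),\dots,\theta(u_m))$, $\theta(k(u_1^n))=k(\theta(u_1),\dots,\theta(u_n))$, $\theta(1_H)=1_H$. $rad(E)$ is the set of $u$ with $k(u^{(r)},1_H^{(n-r)})\in E$ for some $r\le n$ or $k_{(l)}(u^{(r)})\in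 E$ for some $r=l(n-1)+1>n$ (equivalently the intersection of all $n$-ary prime hyperideals containing $E$). A proper hyperideal $M$ is $\theta$-maximal if for every hyperideal $E$ with $M\subseteq E$, either $\theta(E)\subseteq M$ or $E=H$. A proper hyperideal $E$ is an $n$-ary Endo-prime hyperideal associated with $\theta$ if for all $u_1,\dots,u_n\in H$, $k(u_1^n)\in E$ implies that for some $i$, $u_i\in E$ or $\theta\big(k(u_1^{i-1},1_H,u_{i+1}^n)\big)\in E$; it is an $n$-ary Endo-primary hyperideal associated with $\theta$ if $k(u_1^n)\in E$ implies that for some $i$, $u_i\in E$ or $\theta\big(k(u_1^{i-1},1_H,u_{i+1}^n)\big)\in rad(E)$. *)

theory Defs
  imports Main "HOL-Library.Multiset"
begin

text \<open>Elements of H are the elements of the type 'a (H = UNIV).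
  An m-ary hyperoperation is h :: 'a list => 'a set, an n-ary operation is
  k :: 'a list => 'a; only argument lists of the right length matter.
  List positions are 0-based.\<close>

definition hset :: "('a list \<Rightarrow> 'a set) \<Rightarrow> 'a set list \<Rightarrow> 'a set" where
  "hset h As = \<Union> {h ys | ys. list_all2 (\<in>) ys As}"

definition hneg :: "nat \<Rightarrow> ('a list \<Rightarrow> 'a set) \<Rightarrow> 'a \<Rightarrow> 'a \<Rightarrow> 'a" where
  "hneg m h z u = (THE v. z \<in> h (u # v # replicate (m - 2) z))"

definition canonical_hypergroup :: "nat \<Rightarrow> ('a list \<Rightarrow> 'a set) \<Rightarrow> 'a \<Rightarrow> bool" where
  "canonical_hypergroup m h z \<longleftrightarrow>
     m \<ge> 2 \<and>
     (\<forall>xs. length xs = m \<longrightarrow> h xs \<noteq> {}) \<and>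
     (\<forall>xs i j. length xs = 2 * m - 1 \<and> i < m \<and> j < m \<longrightarrow>
        hset h (map (\<lambda>x. {x}) (take i xs) @ [h (take m (drop i xs))] @ map (\<lambda>x. {x}) (drop (i + m) xs))
      = hset h (map (\<lambda>x. {x}) (take j xs) @ [h (take m (drop j xs))] @ map (\<lambda>x. {x}) (drop (j + m) xs))) \<and>
     (\<forall>xs ys. length xs = m \<and> mset xs = mset ys \<longrightarrow> h xs = h ys) \<and>
     (\<forall>u. h (u # replicate (m - 1) z) = {u}) \<and>
     (\<forall>z'. (\<forall>u. h (u # replicate (m - 1) z') = {u}) \<longrightarrow> z' = z) \<and>
     (\<forall>u. \<exists>!v. z \<in> h (u # v # replicate (m - 2) z)) \<and>
     (\<forall>xs x i. length xs = m \<and> i < m \<and> x \<in> h xs \<longrightarrow>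
        xs ! i \<in> h ((map (hneg m h z) xs)[i := x]))"

definition krasner_hyperring ::
  "nat \<Rightarrow> nat \<Rightarrow> ('a list \<Rightarrow> 'a set) \<Rightarrow> ('a list \<Rightarrow> 'a) \<Rightarrow> 'a \<Rightarrow> 'a \<Rightarrow> bool" where
  "krasner_hyperring m n h k z one \<longleftrightarrow>
     canonical_hypergroup m h z \<and> n \<ge> 2 \<and>
     (\<forall>xs i. length xs = 2 * n - 1 \<and> i < n \<longrightarrow>
        k (take i xs @ [k (take n (drop i xs))] @ drop (i + n) xs) = k (k (take n xs) # drop n xs)) \<and>
     (\<forall>xs ys. length xs = n \<and> mset xs = mset ys \<longrightarrow> k xs = k ys) \<and>
     (\<forall>xs ys i. length xs = n - 1 \<and> length ys = m \<and> i \<le> n - 1 \<longrightarrow>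
        (\<lambda>y. k (take i xs @ y # drop i xs)) ` h ys
          = h (map (\<lambda>y. k (take i xs @ y # drop i xs)) ys)) \<and>
     (\<forall>xs. length xs = n - 1 \<longrightarrow> k (z # xs) = z) \<and>
     (\<forall>u. k (u # replicate (n - 1) one) = u)"

definition endomorphism ::
  "nat \<Rightarrow> nat \<Rightarrow> ('a list \<Rightarrow> 'a set) \<Rightarrow> ('a list \<Rightarrow> 'a) \<Rightarrow> 'a \<Rightarrow> ('a \<Rightarrow> 'a) \<Rightarrow> bool" where
  "endomorphism m n h k one \<theta> \<longleftrightarrow>
     (\<forall>xs. length xs = m \<longrightarrow> \<theta> ` h xs = h (map \<theta> xs)) \<and>
     (\<forall>xs. length xs = n \<longrightarrow> \<theta> (k xs) = k (map \<theta> xs)) \<and>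
     \<theta> one = one"

definition hyperideal ::
  "nat \<Rightarrow> nat \<Rightarrow> ('a list \<Rightarrow> 'a set) \<Rightarrow> ('a list \<Rightarrow> 'a) \<Rightarrow> 'a \<Rightarrow> 'a set \<Rightarrow> bool" where
  "hyperideal m n h k z I \<longleftrightarrow>
     I \<noteq> {} \<and>
     (\<forall>xs. length xs = m \<and> set xs \<subseteq> I \<longrightarrow> h xs \<subseteq> I) \<and>
     (\<forall>x\<in>I. hneg m h z x \<in> I) \<and>
     (\<forall>xs i. length xs = n \<and> i < n \<and> xs ! i \<in> I \<longrightarrow> k xs \<in> I)"

text \<open>kpow k n u l = k_(l)(u^(r)) with r = l(n-1)+1.\<close>
fun kpow :: "('a list \<Rightarrow> 'a) \<Rightarrow> nat \<Rightarrow> 'a \<Rightarrow> nat \<Rightarrow> 'a" where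
  "kpow k n u 0 = u"
| "kpow k n u (Suc l) = k (kpow k n u l # replicate (n - 1) u)"

definition hrad :: "nat \<Rightarrow> ('a list \<Rightarrow> 'a) \<Rightarrow> 'a \<Rightarrow> 'a set \<Rightarrow> 'a set" where
  "hrad n k one E = {u. (\<exists>r. 1 \<le> r \<and> r \<le> n \<and> k (replicate r u @ replicate (n - r) one) \<in> E)
                    \<or> (\<exists>l. l * (n - 1) + 1 > n \<and> kpow k n u l \<in> E)}"

definition theta_maximal ::
  "nat \<Rightarrow> nat \<Rightarrow> ('a list \<Rightarrow> 'a set) \<Rightarrow> ('a list \<Rightarrow> 'a) \<Rightarrow> 'a \<Rightarrow> ('a \<Rightarrow> 'a) \<Rightarrow> 'a set \<Rightarrow> bool" where
  "theta_maximal m n h k z \<theta> M \<longleftrightarrow>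
     hyperideal m n h k z M \<and> M \<noteq> UNIV \<and>
     (\<forall>E. hyperideal m n h k z E \<and> M \<subseteq> E \<longrightarrow> \<theta> ` E \<subseteq> M \<or> E = UNIV)"

definition endo_prime ::
  "nat \<Rightarrow> nat \<Rightarrow> ('a list \<Rightarrow> 'a set) \<Rightarrow> ('a list \<Rightarrow> 'a) \<Rightarrow> 'a \<Rightarrow> 'a \<Rightarrow> ('a \<Rightarrow> 'a) \<Rightarrow> 'a set \<Rightarrow> bool" where
  "endo_prime m n h k z one \<theta> E \<longleftrightarrow>
     hyperideal m n h k z E \<and> E \<noteq> UNIV \<and>
     (\<forall>us. length us = n \<and> k us \<in> E \<longrightarrow>
        (\<exists>i<n. us ! i \<in> E \<or> \<theta> (k (us[i := one])) \<in> E))"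

definition endo_primary ::
  "nat \<Rightarrow> nat \<Rightarrow> ('a list \<Rightarrow> 'a set) \<Rightarrow> ('a list \<Rightarrow> 'a) \<Rightarrow> 'a \<Rightarrow> 'a \<Rightarrow> ('a \<Rightarrow> 'a) \<Rightarrow> 'a set \<Rightarrow> bool" where
  "endo_primary m n h k z one \<theta> E \<longleftrightarrow>
     hyperideal m n h k z E \<and> E \<noteq> UNIV \<and>
     (\<forall>us. length us = n \<and> k us \<in> E \<longrightarrow>
        (\<exists>i<n. us ! i \<in> E \<or> \<theta> (k (us[i := one])) \<in> hrad n k one E))"

end

theory Submission
  imports Defs
begin

text \<open>For a \<theta>-maximal hyperideal M and k(u, u_2^n) \<in> M, consider the colon hyperideal
  F = (M : u) = {x. k(x, u, 1^(n-2)) \<in> M}, which contains M. Either F = H, and then u \<in> M;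
  or \<theta>(F) \<subseteq> M, and since k(1, u_2^n) \<in> F we get \<theta>(k(1, u_2^n)) \<in> M.
  For (2), rad(E) is then Endo-prime and contains E; moreover \<theta>(rad(E)) \<subseteq> rad(E) by
  \<theta>-maximality, so a factor in rad(E) can be absorbed into the product that \<theta> is applied to.\<close>

locale comm_krasner_hyperring =
  fixes m n :: nat and h :: "'a list \<Rightarrow> 'a set" and k :: "'a list \<Rightarrow> 'a" and z one :: 'a
  assumes krasner: "krasner_hyperring m n h k z one"
begin

lemma n_ge_2: "n \<ge> 2"
  using krasner unfolding krasner_hyperring_def by blast

lemma m_ge_2: "m \<ge> 2"
  using krasner unfolding krasner_hyperring_def canonical_hypergroup_def by blast

lemma inverse_unique: "\<exists>!v. z \<in> h (u # v # replicate (m - 2) z)"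
proof -
  have "\<forall>u. \<exists>!v. z \<in> h (u # v # replicate (m - 2) z)"
    using krasner unfolding krasner_hyperring_def canonical_hypergroup_def by (elim conjE)
  then show ?thesis by (rule spec)
qed

lemma k_distrib_first:
  assumes "length c = n - 1" and "length ys = m"
  shows "(\<lambda>y. k (y # c)) ` h ys = h (map (\<lambda>y. k (y # c)) ys)"
proof -
  have "\<forall>xs ys i. length xs = n - 1 \<and> length ys = m \<and> i \<le> n - 1 \<longrightarrow>
      (\<lambda>y. k (take i xs @ y # drop i xs)) ` h ys = h (map (\<lambda>y. k (take i xs @ y # drop i xs)) ys)"
    using krasner unfolding krasner_hyperring_def by blast
  from this[rule_format, of c ys 0] assms show ?thesis by simp
qed

lemma k_zero_first: "length c = n - 1 \<Longrightarrow> k (z # c) = z"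
  using krasner unfolding krasner_hyperring_def by blast

lemma k_one: "k (u # replicate (n - 1) one) = u"
  using krasner unfolding krasner_hyperring_def by blast

lemma k_mset_cong: "length xs = n \<Longrightarrow> mset xs = mset ys \<Longrightarrow> k xs = k ys"
  using krasner unfolding krasner_hyperring_def by blast

lemma k_assoc:
  "length xs = 2 * n - 1 \<Longrightarrow> i < n \<Longrightarrow>
    k (take i xs @ [k (take n (drop i xs))] @ drop (i + n) xs) = k (k (take n xs) # drop n xs)"
  using krasner unfolding krasner_hyperring_def by blast

lemma k_swap:
  assumes A: "length A = n - 1" and B: "length B = n - 1"
  shows "k (k (x # A) # B) = k (k (x # B) # A)"
proof -
  have n: "n \<ge> 2" by (rule n_ge_2)
  define L where "L = A @ x # B"
  have "k (take (n - 1) L @ [k (take n (drop (n - 1) L))] @ drop (n - 1 + n) L)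
      = k (k (take n L) # drop n L)"
    by (rule k_assoc) (use A B n in \<open>simp_all add: L_def\<close>)
  then have "k (A @ [k (x # B)]) = k (k (A @ [x]) # B)"
    using A B n by (simp add: L_def)
  moreover have "k (A @ [k (x # B)]) = k (k (x # B) # A)"
    by (rule k_mset_cong) (use A n in auto)
  moreover have "k (A @ [x]) = k (x # A)"
    by (rule k_mset_cong) (use A n in auto)
  ultimately show ?thesis by simp
qed

lemma k_hneg_first:
  assumes c: "length c = n - 1"
  shows "k (hneg m h z x # c) = hneg m h z (k (x # c))"
proof -
  define v where "v = hneg m h z x"
  have "z \<in> h (x # v # replicate (m - 2) z)"
    unfolding v_def hneg_def by (rule theI'[OF inverse_unique])
  then have "k (z # c) \<in> (\<lambda>y. k (y # c)) ` h (x # v # replicate (m - 2) z)"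
    by blast
  also have "\<dots> = h (map (\<lambda>y. k (y # c)) (x # v # replicate (m - 2) z))"
    by (rule k_distrib_first[OF c]) (use m_ge_2 in simp)
  finally have "z \<in> h (k (x # c) # k (v # c) # replicate (m - 2) z)"
    by (simp add: k_zero_first[OF c] map_replicate)
  then have "hneg m h z (k (x # c)) = k (v # c)"
    unfolding hneg_def by (rule the1_equality[OF inverse_unique])
  then show ?thesis
    by (simp add: v_def)
qed

lemma hyperideal_k_closed:
  "hyperideal m n h k z I \<Longrightarrow> length xs = n \<Longrightarrow> i < n \<Longrightarrow> xs ! i \<in> I \<Longrightarrow> k xs \<in> I"
  unfolding hyperideal_def by blast

lemma subset_colon:
  assumes "hyperideal m n h k z M" and "length c = n - 1"
  shows "M \<subseteq> {x. k (x # c) \<in> M}"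
  using hyperideal_k_closed[OF assms(1), of "_ # c" 0] assms(2) n_ge_2 by auto

lemma colon_hyperideal:
  assumes M: "hyperideal m n h k z M" and c: "length c = n - 1"
  shows "hyperideal m n h k z {x. k (x # c) \<in> M}" (is "hyperideal m n h k z ?F")
proof -
  have "?F \<noteq> {}"
    using subset_colon[OF M c] M unfolding hyperideal_def by blast
  moreover have "h xs \<subseteq> ?F" if "length xs = m" and "set xs \<subseteq> ?F" for xs
  proof -
    have "set (map (\<lambda>y. k (y # c)) xs) \<subseteq> M"
      using that(2) by auto
    then have "h (map (\<lambda>y. k (y # c)) xs) \<subseteq> M"
      using M that(1) unfolding hyperideal_def by simp
    then show ?thesis
      using k_distrib_first[OF c that(1)] by blast
  qed
  moreover have "hneg m h z x \<in> ?F" if "x \<in> ?F" for x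
    using that M k_hneg_first[OF c] unfolding hyperideal_def by simp
  moreover have "k xs \<in> ?F" if xs: "length xs = n" "i < n" "xs ! i \<in> ?F" for xs i
  proof -
    define rest where "rest = take i xs @ drop (Suc i) xs"
    have rest: "length rest = n - 1"
      using xs by (simp add: rest_def)
    have "mset xs = mset (xs ! i # rest)"
      using xs by (subst id_take_nth_drop[of i xs]) (simp_all add: rest_def)
    then have "k xs = k (xs ! i # rest)"
      using k_mset_cong xs(1) by blast
    moreover have "k (k (xs ! i # c) # rest) \<in> M"
      using hyperideal_k_closed[OF M, of "k (xs ! i # c) # rest" 0] xs rest n_ge_2 by simp
    ultimately show ?thesis
      using k_swap[OF rest c] by simp
  qed
  ultimately show ?thesis
    unfolding hyperideal_def by blast
qed

lemma theta_maximal_first_factor: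
  assumes max: "theta_maximal m n h k z \<theta> M"
    and us: "length us = n" and kus: "k us \<in> M"
  shows "us ! 0 \<in> M \<or> \<theta> (k (us[0 := one])) \<in> M"
proof -
  have M: "hyperideal m n h k z M"
    using max unfolding theta_maximal_def by blast
  obtain u rest where us_eq: "us = u # rest" and rest: "length rest = n - 1"
    using us n_ge_2 by (cases us) auto
  define c where "c = u # replicate (n - 2) one"
  have c: "length c = n - 1"
    using n_ge_2 by (simp add: c_def)
  define F where "F = {x. k (x # c) \<in> M}"
  have "k (one # c) = k (u # replicate (n - 1) one)"
  proof (rule k_mset_cong)
    have "n - 1 = Suc (n - 2)"
      using n_ge_2 by simp
    then show "mset (one # c) = mset (u # replicate (n - 1) one)"
      by (simp add: c_def)
  qed (use c n_ge_2 in simp)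
  also have "\<dots> = u"
    by (rule k_one)
  finally have one_c: "k (one # c) = u" .
  have "k (k (one # rest) # c) = k us"
    using k_swap[OF rest c] one_c us_eq by simp
  then have "k (one # rest) \<in> F"
    using kus by (simp add: F_def)
  moreover have "\<theta> ` F \<subseteq> M \<or> F = UNIV"
    using max colon_hyperideal[OF M c] subset_colon[OF M c] unfolding theta_maximal_def F_def by blast
  ultimately show ?thesis
    using one_c us_eq by (auto simp: F_def)
qed

lemma theta_maximal_endo_prime:
  assumes "theta_maximal m n h k z \<theta> M"
  shows "endo_prime m n h k z one \<theta> M"
proof -
  have "0 < n"
    using n_ge_2 by simp
  then show ?thesis
    using assms theta_maximal_first_factor[OF assms]
    unfolding theta_maximal_def endo_prime_def by blast
qed

lemma subset_hrad: "E \<subseteq> hrad n k one E"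
proof
  fix u assume "u \<in> E"
  then have "k (replicate 1 u @ replicate (n - 1) one) \<in> E"
    using k_one[of u] by simp
  then show "u \<in> hrad n k one E"
    unfolding hrad_def using n_ge_2 by force
qed

lemma endo_primary_if_hrad_theta_maximal:
  assumes E: "hyperideal m n h k z E"
    and max: "theta_maximal m n h k z \<theta> (hrad n k one E)" (is "theta_maximal m n h k z \<theta> ?R")
  shows "endo_primary m n h k z one \<theta> E"
proof -
  have R: "hyperideal m n h k z ?R" and "?R \<noteq> UNIV"
    using max unfolding theta_maximal_def by blast+
  then have "E \<noteq> UNIV"
    using subset_hrad by blast
  have invariant: "\<theta> ` ?R \<subseteq> ?R"
    using max \<open>?R \<noteq> UNIV\<close> unfolding theta_maximal_def by blast
  have "\<exists>i<n. us ! i \<in> E \<or> \<theta> (k (us[i := one])) \<in> ?R"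
    if us: "length us = n" and "k us \<in> E" for us
  proof -
    obtain i where i: "i < n" and "us ! i \<in> ?R \<or> \<theta> (k (us[i := one])) \<in> ?R"
      using theta_maximal_endo_prime[OF max] us \<open>k us \<in> E\<close> subset_hrad
      unfolding endo_prime_def by blast
    then consider "\<theta> (k (us[i := one])) \<in> ?R" | "us ! i \<in> ?R"
      by blast
    then show ?thesis
    proof cases
      case 2
      define j :: nat where "j = (if i = 0 then 1 else 0)"
      have j: "j < n" "j \<noteq> i"
        using n_ge_2 by (auto simp: j_def)
      have "k (us[j := one]) \<in> ?R"
        using hyperideal_k_closed[OF R, of "us[j := one]" i] 2 us i j by simp
      then show ?thesis
        using invariant j(1) by blast
    qed (use i in blast)
  qed
  then show ?thesis
    using E \<open>E \<noteq> UNIV\<close> unfolding endo_primary_def by blast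
qed

end

theorem mainTheorem20:
  fixes h :: "'a list \<Rightarrow> 'a set" and k :: "'a list \<Rightarrow> 'a"
    and z one :: 'a and \<theta> :: "'a \<Rightarrow> 'a" and m n :: nat
  assumes "krasner_hyperring m n h k z one"
    and "endomorphism m n h k one \<theta>"
  shows "(\<forall>M. theta_maximal m n h k z \<theta> M \<longrightarrow> endo_prime m n h k z one \<theta> M) \<and>
         (\<forall>E. hyperideal m n h k z E \<and> theta_maximal m n h k z \<theta> (hrad n k one E)
              \<longrightarrow> endo_primary m n h k z one \<theta> E)"
proof -
  interpret comm_krasner_hyperring m n h k z one
    by (rule comm_krasner_hyperring.intro) (rule assms(1))
  show ?thesis
    using theta_maximal_endo_prime endo_primary_if_hrad_theta_maximal by blast
qed

end
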